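(* Let $X$ be a complex abelian variety of dimension $g$, and let $\alpha\in\mathrm{Br}(X)$ be a topologically trivial Brauer class with $\mathrm{per}(\alpha)=p^r$ for a prime $p$ and an integer $r>0$. Let $b\in\mathrm{H}^2(X^{an},\mathbb{Z})$ be an integral class whose image in $\mathrm{H}^2(X^{an},\mathbb{Z}/p^r\mathbb{Z})\cong\mathrm{H}^2_{\acute{e}t}(X,\mu_{p^r})$ maps to $\alpha$, and set $B=b/p^r$. Put \[N=rs := rg-\left\lfloor\frac{g-1}{p-1}\right\rfloor+\lfloor\log_p(g-1)\rfloor+1\] and $d=p^{N}$. Then the de Jong--Perry obstruction vanishes in degree $d$: there exist rational Hodge classes $c_j\in\mathrm{H}^{2j}(X^{an},\mathbb{Q})$, $1\leq j\leq m=\min\{d,g\}$ (one may take all $c_j=0$), such that the classes \[p_i^{B,d}(1,c_1,\dots,c_i)=\binom{d}{i}B^i+\sum_{j=1}^i\binom{d-j}{i-j}B^{i-j}c_j\] are integral for all $1\leq i\leq m$. When $p^r=2$, one has $rs=\lfloor\log_p(g-1)\rfloor+2$.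
   Context: For an abelian variety $\mathrm{H}^*(X^{an},\mathbb{Z})$ is torsion-free, so every Brauer class is topologically trivial (in the kernel of $\mathrm{Br}(X)\to\mathrm{H}^3(X^{an},\mathbb{Z})_{tors}$). A class in $\mathrm{H}^{2i}(X^{an},\mathbb{Q})$ is integral if it lies in the image of $\mathrm{H}^{2i}(X^{an},\mathbb{Z})$. The de Jong--Perry obstruction to $\mathrm{ind}(\alpha)\mid d$ is the non-existence of rational Hodge classes $c_j$ making all $p_i^{B,d}(1,c_1,\dots,c_i)$, $1\le i\le\min\{d,\dim X\}$, integral; "the algorithm fails in degree $2d$" means this obstruction vanishes for $d$. *)

theory Defs
  imports Complex_Main "HOL-Combinatorics.Permutations" "HOL-Computational_Algebra.Primes"
begin

text \<open>Model: X^an = V / Lambda with Lambda = Z^n (n = 2g, standard basis e_0..e_(n-1)),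
 V = R^n, complex structure J (an n x n real matrix with J*J = -1).
 H^k(X^an, Q) = alternating k-forms on Lambda_Q, represented by their values on
 e_S (S a k-subset of {..<n}, listed increasingly).\<close>

type_synonym form = "nat set \<Rightarrow> real"

definition is_form :: "nat \<Rightarrow> nat \<Rightarrow> form \<Rightarrow> bool" where
  "is_form n k \<omega> \<longleftrightarrow> (\<forall>S. \<omega> S \<noteq> 0 \<longrightarrow> finite S \<and> S \<subseteq> {..<n} \<and> card S = k)"

definition integral_form :: "form \<Rightarrow> bool" where
  "integral_form \<omega> \<longleftrightarrow> (\<forall>S. \<omega> S \<in> \<int>)"

definition rational_form :: "form \<Rightarrow> bool" where
  "rational_form \<omega> \<longleftrightarrow> (\<forall>S. \<omega> S \<in> \<rat>)"

text \<open>Cup (wedge) product: e_A \<and> e_B = (-1)^(inversions) e_(A \<union> B).\<close>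
definition shsign :: "nat set \<Rightarrow> nat set \<Rightarrow> real" where
  "shsign A B = (-1) ^ card {(a, b). a \<in> A \<and> b \<in> B \<and> b < a}"

definition wedge :: "form \<Rightarrow> form \<Rightarrow> form" where
  "wedge \<omega> \<eta> S = (\<Sum>A\<in>Pow S. shsign A (S - A) * \<omega> A * \<eta> (S - A))"

definition one_form :: form where
  "one_form S = (if S = {} then 1 else 0)"

primrec wpow :: "form \<Rightarrow> nat \<Rightarrow> form" where
  "wpow \<omega> 0 = one_form"
| "wpow \<omega> (Suc i) = wedge \<omega> (wpow \<omega> i)"

definition ldet :: "nat \<Rightarrow> (nat \<Rightarrow> nat \<Rightarrow> real) \<Rightarrow> real" where
  "ldet k A = (\<Sum>\<sigma> | \<sigma> permutes {..<k}. of_int (sign \<sigma>) * (\<Prod>i<k. A i (\<sigma> i)))"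

definition form_eval :: "nat \<Rightarrow> nat \<Rightarrow> form \<Rightarrow> (nat \<Rightarrow> nat \<Rightarrow> real) \<Rightarrow> real" where
  "form_eval n k \<omega> v = (\<Sum>S | S \<subseteq> {..<n} \<and> card S = k.
      \<omega> S * ldet k (\<lambda>a c. v c (sorted_list_of_set S ! a)))"

definition mv :: "nat \<Rightarrow> (nat \<Rightarrow> nat \<Rightarrow> real) \<Rightarrow> (nat \<Rightarrow> real) \<Rightarrow> (nat \<Rightarrow> real)" where
  "mv n M x = (\<lambda>a. \<Sum>b<n. M a b * x b)"

definition rotJ :: "nat \<Rightarrow> (nat \<Rightarrow> nat \<Rightarrow> real) \<Rightarrow> real \<Rightarrow> (nat \<Rightarrow> real) \<Rightarrow> (nat \<Rightarrow> real)" where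
  "rotJ n J \<theta> x = (\<lambda>a. cos \<theta> * x a + sin \<theta> * mv n J x a)"

text \<open>Rational Hodge class of degree k: a rational k-form of type (k/2,k/2), i.e. invariant
 under pullback by exp(\<theta>J) = cos \<theta> + sin \<theta> J for all \<theta> (this acts by e^(i(p-q)\<theta>) on H^(p,q)).\<close>
definition hodge_class :: "nat \<Rightarrow> (nat \<Rightarrow> nat \<Rightarrow> real) \<Rightarrow> nat \<Rightarrow> form \<Rightarrow> bool" where
  "hodge_class n J k \<omega> \<longleftrightarrow> is_form n k \<omega> \<and> rational_form \<omega> \<and>
     (\<forall>\<theta> v. form_eval n k \<omega> (\<lambda>c. rotJ n J \<theta> (v c)) = form_eval n k \<omega> v)"

definition complex_structure :: "nat \<Rightarrow> (nat \<Rightarrow> nat \<Rightarrow> real) \<Rightarrow> bool" where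
  "complex_structure n J \<longleftrightarrow> (\<forall>a b. (n \<le> a \<or> n \<le> b) \<longrightarrow> J a b = 0) \<and>
     (\<forall>a<n. \<forall>c<n. (\<Sum>b<n. J a b * J b c) = (if a = c then -1 else 0))"

definition bil :: "nat \<Rightarrow> (nat \<Rightarrow> nat \<Rightarrow> int) \<Rightarrow> (nat \<Rightarrow> real) \<Rightarrow> (nat \<Rightarrow> real) \<Rightarrow> real" where
  "bil n E x y = (\<Sum>a<n. \<Sum>b<n. of_int (E a b) * x a * y b)"

text \<open>Riemann condition: the complex torus R^n/Z^n with complex structure J is an abelian
 variety iff it carries a polarization (positive definite Riemann form).\<close>
definition polarizable :: "nat \<Rightarrow> (nat \<Rightarrow> nat \<Rightarrow> real) \<Rightarrow> bool" where
  "polarizable n J \<longleftrightarrow> (\<exists>E :: nat \<Rightarrow> nat \<Rightarrow> int.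
     (\<forall>a b. E a b = - E b a) \<and>
     (\<forall>x y. bil n E (mv n J x) (mv n J y) = bil n E x y) \<and>
     (\<forall>x. (\<exists>a<n. x a \<noteq> 0) \<longrightarrow> bil n E x (mv n J x) > 0))"

definition pBd :: "nat \<Rightarrow> form \<Rightarrow> (nat \<Rightarrow> form) \<Rightarrow> nat \<Rightarrow> form" where
  "pBd d B c i = (\<lambda>S. real (d choose i) * wpow B i S +
      (\<Sum>j=1..i. real ((d - j) choose (i - j)) * wedge (wpow B (i - j)) (c j) S))"

definition expN :: "nat \<Rightarrow> nat \<Rightarrow> nat \<Rightarrow> int" where
  "expN p r g = int r * int g - (int g - 1) div (int p - 1)
                + \<lfloor>log (real p) (real g - 1)\<rfloor> + 1"

end

theory Submission
  imports Defs "HOL-Combinatorics.Multiset_Permutations"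
begin

(* Idea: all c_j = 0 work.  Then p_i = C(d,i) B^i = (C(d,i) i! / p^(r i)) (b^i / i!), and b^i / i!
   is integral because b is an integral 2-form (divided powers).  The number
   C(d,i) i! = d (d-1) ... (d-i+1) with d = p^N is divisible by p^(N + v_p((i-1)!)), and by
   Legendre's formula v_p(m!) = (m - s_p(m)) / (p - 1), where the digit sum s_p(m) of m < g is at
   most (p - 1) (floor(log_p(g - 1)) + 1); N is chosen exactly so that this gives r i.
   Neither that X is an abelian variety nor that b/p is not a Hodge class up to integral classes
   (i.e. per(alpha) = p^r) is needed. *)

text \<open>Legendre's formula: the sum of the \<open>\<lfloor>m / p^k\<rfloor>\<close>, \<open>k \<ge> 1\<close>, is the exponent of \<open>p\<close> in \<open>m!\<close>.\<close>
fun legendre_sum :: "nat \<Rightarrow> nat \<Rightarrow> nat" where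
  "legendre_sum p m = (if p \<le> 1 \<or> m = 0 then 0 else m div p + legendre_sum p (m div p))"

declare legendre_sum.simps [simp del]

lemma legendre_sum_unfold:
  "p \<ge> 2 \<Longrightarrow> m > 0 \<Longrightarrow> legendre_sum p m = m div p + legendre_sum p (m div p)"
  by (subst legendre_sum.simps) simp

lemma pow_mult_fact_dvd_fact:
  fixes p q :: nat
  assumes "p > 0"
  shows "p ^ q * fact q dvd fact (p * q)"
proof (induction q)
  case 0
  then show ?case by simp
next
  case (Suc q)
  have "fact (p * Suc q) = (p * q + p) * (fact (p * q + p - 1) :: nat)"
    using fact_reduce[of "p * q + p", where 'a = nat] assms by (simp add: algebra_simps)
  moreover have "fact (p * q) dvd (fact (p * q + p - 1) :: nat)"
    using assms by (intro fact_dvd) simp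
  ultimately have "fact (p * q) * (p * q + p) dvd fact (p * Suc q)"
    by simp
  moreover have "p ^ Suc q * fact (Suc q) = (p ^ q * fact q) * (p * q + p)"
    by (simp add: algebra_simps)
  ultimately show ?case
    using Suc.IH by (metis dvd_trans mult_dvd_mono dvd_refl)
qed

lemma pow_legendre_sum_dvd_fact:
  assumes "p \<ge> 2"
  shows "p ^ legendre_sum p m dvd fact m"
proof (induction m rule: less_induct)
  case (less m)
  show ?case
  proof (cases "m = 0")
    case True
    then show ?thesis by (simp add: legendre_sum.simps)
  next
    case False
    define q where "q = m div p"
    have "p ^ legendre_sum p m = p ^ q * p ^ legendre_sum p q"
      using False assms by (simp add: legendre_sum_unfold q_def power_add)
    also have "\<dots> dvd p ^ q * fact q"
      using less[of q] False assms by (simp add: q_def)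
    also have "\<dots> dvd fact (p * q)"
      using assms by (intro pow_mult_fact_dvd_fact) simp
    also have "\<dots> dvd fact m"
      by (intro fact_dvd) (simp add: q_def)
    finally show ?thesis .
  qed
qed

text \<open>\<open>m - (p - 1) * legendre_sum p m\<close> is the base \<open>p\<close> digit sum of \<open>m\<close>, so this says that a
  \<open>k\<close>-digit number has digit sum at most \<open>(p - 1) k\<close>.\<close>
lemma le_legendre_sum_digits:
  assumes "p \<ge> 2" "m < p ^ k"
  shows "m \<le> (p - 1) * (legendre_sum p m + k)"
  using assms(2)
proof (induction k arbitrary: m)
  case 0
  then show ?case by simp
next
  case (Suc k)
  show ?case
  proof (cases "m = 0")
    case True
    then show ?thesis by simp
  next
    case False
    define q where "q = m div p"
    have "q < p ^ k"
      using Suc.prems assms by (simp add: q_def less_mult_imp_div_less mult.commute)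
    then have IH: "q \<le> (p - 1) * (legendre_sum p q + k)"
      by (rule Suc.IH)
    have "m = p * q + m mod p"
      by (simp add: q_def)
    moreover have "m mod p \<le> p - 1"
      using assms by (simp add: less_Suc_eq_le[symmetric])
    moreover have "p * q = (p - 1) * q + q"
      using assms by (simp add: algebra_simps)
    moreover have "legendre_sum p m + Suc k = q + (legendre_sum p q + k) + 1"
      using False assms by (simp add: legendre_sum_unfold q_def)
    then have "(p - 1) * (legendre_sum p m + Suc k) = (p - 1) * q + (p - 1) * (legendre_sum p q + k) + (p - 1)"
      by (simp only: distrib_left mult_1_right)
    ultimately show ?thesis
      using IH by linarith
  qed
qed

lemma pow_dvd_choose_mult_fact:
  assumes "p \<ge> 2" "i \<ge> 1"
  shows "p ^ (N + legendre_sum p (i - 1)) dvd (p ^ N choose i) * fact i"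
proof -
  obtain n where n: "p ^ N = Suc n"
    using assms(1) by (metis gr0_implies_Suc pos2 order_less_le_trans zero_less_power)
  obtain j where j: "i = Suc j"
    using assms(2) by (cases i) auto
  have "(p ^ N choose i) * fact i = p ^ N * ((n choose j) * fact j)"
    using Suc_times_binomial_eq[of n j] n j by (simp add: algebra_simps)
  moreover have "p ^ legendre_sum p j dvd (n choose j) * fact j"
    using pow_legendre_sum_dvd_fact[OF assms(1)] by (simp add: dvd_mult)
  ultimately show ?thesis
    using j by (simp add: power_add)
qed

lemma floor_log_natE:
  fixes p g :: nat
  assumes "p \<ge> 2" "g \<ge> 2"
  obtains L where "\<lfloor>log (real p) (real g - 1)\<rfloor> = int L" "g - 1 < p ^ (L + 1)"
proof -
  obtain L where L: "p ^ L \<le> g - 1" "g - 1 < p ^ (L + 1)"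
    using ex_power_ivl1[OF assms(1), of "g - 1"] assms(2) by fastforce
  have "\<lfloor>log (real p) (real (g - 1))\<rfloor> = int L"
    using floor_log_nat_eq_if[OF L assms(1)] .
  then show thesis
    using that L(2) assms(2) by (simp add: of_nat_diff)
qed

lemma expN_eq_nat:
  assumes "p \<ge> 2" "g \<ge> 2" "r > 0" "\<lfloor>log (real p) (real g - 1)\<rfloor> = int L"
  shows "expN p r g = int (r * g - (g - 1) div (p - 1) + L + 1)"
proof -
  have "(g - 1) div (p - 1) \<le> g"
    by (meson div_le_dividend diff_le_self order_trans)
  also have "g \<le> r * g"
    using assms(3) by simp
  finally have "(g - 1) div (p - 1) \<le> r * g" .
  then show ?thesis
    using assms unfolding expN_def by (simp add: of_nat_diff zdiv_int)
qed

lemma mult_le_expN_plus_legendre_sum: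
  assumes "p \<ge> 2" "r > 0" "1 \<le> i" "i \<le> g" "g - 1 < p ^ (L + 1)"
  shows "r * i \<le> r * g - (g - 1) div (p - 1) + L + 1 + legendre_sum p (i - 1)"
proof -
  define e where "e = legendre_sum p (i - 1)"
  have "i - 1 \<le> (p - 1) * (e + (L + 1))"
    unfolding e_def using assms by (intro le_legendre_sum_digits) auto
  moreover have "g - i \<le> (p - 1) * (g - i)"
    using assms(1) by (simp add: Suc_le_eq)
  moreover have "(p - 1) * (e + L + 1 + (g - i)) = (p - 1) * (e + (L + 1)) + (p - 1) * (g - i)"
    by (simp only: add.assoc distrib_left)
  ultimately have "g - 1 \<le> (p - 1) * (e + L + 1 + (g - i))"
    using assms(3,4) by linarith
  then have "(g - 1) div (p - 1) \<le> (p - 1) * (e + L + 1 + (g - i)) div (p - 1)"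
    by (rule div_le_mono)
  also have "\<dots> = e + L + 1 + (g - i)"
    using assms(1) by (intro nonzero_mult_div_cancel_left) simp
  finally have "(g - 1) div (p - 1) \<le> e + L + 1 + (g - i)" .
  moreover have "r * g = r * i + r * (g - i)"
    using assms(4) by (simp add: diff_mult_distrib2)
  moreover have "g - i \<le> r * (g - i)"
    using assms(2) by simp
  ultimately show ?thesis
    unfolding e_def by linarith
qed

lemma prime_pow_dvd_choose_expN_mult_fact:
  assumes "prime p" "r > 0" "g \<ge> 2" "1 \<le> i" "i \<le> g"
  shows "p ^ (r * i) dvd (p ^ nat (expN p r g) choose i) * fact i"
proof -
  have p: "p \<ge> 2"
    using assms(1) by (rule prime_ge_2_nat)
  obtain L where L: "\<lfloor>log (real p) (real g - 1)\<rfloor> = int L" "g - 1 < p ^ (L + 1)"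
    using floor_log_natE[OF p assms(3)] .
  define N where "N = r * g - (g - 1) div (p - 1) + L + 1"
  have "expN p r g = int N"
    unfolding N_def by (rule expN_eq_nat[OF p assms(3,2) L(1)])
  then have "nat (expN p r g) = N"
    by simp
  moreover have "p ^ (r * i) dvd p ^ (N + legendre_sum p (i - 1))"
    unfolding N_def using mult_le_expN_plus_legendre_sum[OF p assms(2,4,5) L(2)]
    by (rule le_imp_power_dvd)
  ultimately show ?thesis
    using pow_dvd_choose_mult_fact[OF p assms(4)] dvd_trans by metis
qed

lemma expN_if_prime_power_eq_2:
  assumes "prime p" "p ^ r = 2"
  shows "expN p r g = \<lfloor>log (real p) (real g - 1)\<rfloor> + 2"
proof -
  have "r \<noteq> 0"
    using assms(2) by (rule contrapos_pn) simp
  then have "p dvd p ^ r"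
    by simp
  then have "p dvd 2"
    using assms(2) by simp
  then have "p = 2"
    using assms(1) by (intro primes_dvd_imp_eq) auto
  then have "r = 1"
    using assms(2) power_inject_exp[of "2::nat" r 1] by simp
  then show ?thesis
    using \<open>p = 2\<close> unfolding expN_def by simp
qed

fun disjoint_pairs :: "nat set list \<Rightarrow> bool" where
  "disjoint_pairs [] = True"
| "disjoint_pairs (A # As) \<longleftrightarrow> card A = 2 \<and> A \<inter> \<Union>(set As) = {} \<and> disjoint_pairs As"

text \<open>The sign of the wedge product of the basis \<open>2\<close>-forms \<open>e\<^sub>A\<close>, \<open>A \<in> set As\<close>, in list order.\<close>
fun pairs_sign :: "nat set list \<Rightarrow> real" where
  "pairs_sign [] = 1"
| "pairs_sign (A # As) = shsign A (\<Union>(set As)) * pairs_sign As"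

definition pairings :: "nat \<Rightarrow> nat set \<Rightarrow> nat set list set" where
  "pairings i S = {As. length As = i \<and> disjoint_pairs As \<and> \<Union>(set As) = S}"

lemma disjoint_pairs_iff:
  "disjoint_pairs As \<longleftrightarrow>
     distinct As \<and> (\<forall>A\<in>set As. card A = 2) \<and> pairwise (\<lambda>A B. A \<inter> B = {}) (set As)"
proof (induction As)
  case Nil
  then show ?case by simp
next
  case (Cons A As)
  have "A \<notin> set As" if "card A = 2" "A \<inter> \<Union>(set As) = {}"
    using that by (metis Int_absorb2 Sup_upper card.empty zero_neq_numeral)
  then show ?case
    using Cons.IH by (auto simp: pairwise_insert)
qed

lemma finite_Union_disjoint_pairs: "disjoint_pairs As \<Longrightarrow> finite (\<Union>(set As))"
  by (induction As) (auto intro: card_ge_0_finite)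

lemma pairs_sign_Ints: "pairs_sign As \<in> \<int>"
  by (induction As) (auto simp: shsign_def)

lemma shsign_Un_right:
  assumes "finite A" "finite X" "finite Y" "X \<inter> Y = {}"
  shows "shsign A (X \<union> Y) = shsign A X * shsign A Y"
proof -
  let ?inv = "\<lambda>Z. {(a, b). a \<in> A \<and> b \<in> Z \<and> b < a}"
  have fin: "finite (?inv Z)" if "finite Z" for Z
    by (rule finite_subset[of _ "A \<times> Z"]) (use that assms(1) in auto)
  have "?inv (X \<union> Y) = ?inv X \<union> ?inv Y" "?inv X \<inter> ?inv Y = {}"
    using assms(4) by auto
  then have "card (?inv (X \<union> Y)) = card (?inv X) + card (?inv Y)"
    using fin assms(2,3) by (simp add: card_Un_disjoint)
  then show ?thesis
    unfolding shsign_def by (simp add: power_add)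
qed

text \<open>Each pair \<open>(a, b) \<in> A \<times> B\<close> is an inversion for exactly one of the two orders.\<close>
lemma shsign_swap:
  assumes "finite A" "finite B" "A \<inter> B = {}" "even (card A * card B)"
  shows "shsign A B = shsign B A"
proof -
  let ?F = "{(a, b). a \<in> A \<and> b \<in> B \<and> b < a}"
  let ?G = "{(b, a). b \<in> B \<and> a \<in> A \<and> a < b}"
  let ?H = "{(a, b). a \<in> A \<and> b \<in> B \<and> a < b}"
  have "?G = prod.swap ` ?H"
    by auto
  then have "card ?G = card ?H"
    by (simp add: card_image)
  have "?F \<union> ?H = A \<times> B"
    using assms(3) by (auto simp: linorder_neq_iff)
  moreover have "finite ?F" "finite ?H"
    using assms(1,2) by (auto intro: finite_subset[of _ "A \<times> B"])
  moreover have "?F \<inter> ?H = {}"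
    by auto
  ultimately have "card ?F + card ?H = card A * card B"
    by (simp flip: card_Un_disjoint add: card_cartesian_product)
  then have "even (card ?F + card ?G)"
    using assms(4) \<open>card ?G = card ?H\<close> by simp
  then show ?thesis
    unfolding shsign_def by (simp add: minus_one_power_iff split: if_split)
qed

lemma pairs_sign_move_to_front:
  "disjoint_pairs (As @ A # Bs) \<Longrightarrow> pairs_sign (As @ A # Bs) = pairs_sign (A # As @ Bs)"
proof (induction As)
  case Nil
  then show ?case by simp
next
  case (Cons B As)
  let ?R = "\<Union>(set (As @ Bs))"
  have B: "card B = 2" "B \<inter> (A \<union> ?R) = {}" and rest: "disjoint_pairs (As @ A # Bs)"
    using Cons.prems by auto
  then have A: "card A = 2" "A \<inter> ?R = {}" and "disjoint_pairs (As @ Bs)"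
    unfolding disjoint_pairs_iff by (auto simp: pairwise_def)
  then have fin: "finite A" "finite B" "finite ?R"
    using B(1) finite_Union_disjoint_pairs[of "As @ Bs"] by (auto intro: card_ge_0_finite)
  have "pairs_sign ((B # As) @ A # Bs) = shsign B (A \<union> ?R) * shsign A ?R * pairs_sign (As @ Bs)"
    using Cons.IH[OF rest] by (simp add: Un_assoc)
  also have "\<dots> = shsign B A * shsign B ?R * shsign A ?R * pairs_sign (As @ Bs)"
    using shsign_Un_right fin A(2) by simp
  also have "\<dots> = shsign A B * shsign A ?R * shsign B ?R * pairs_sign (As @ Bs)"
    using shsign_swap[of B A] fin A(1) B by auto
  also have "\<dots> = pairs_sign (A # (B # As) @ Bs)"
    using shsign_Un_right[of A B ?R] fin B(2) by (simp add: Int_Un_distrib)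
  finally show ?case .
qed

lemma pairs_sign_perm:
  "disjoint_pairs As \<Longrightarrow> distinct Bs \<Longrightarrow> set Bs = set As \<Longrightarrow> pairs_sign Bs = pairs_sign As"
proof (induction As arbitrary: Bs)
  case Nil
  then show ?case by simp
next
  case (Cons A As)
  obtain Bs1 Bs2 where Bs: "Bs = Bs1 @ A # Bs2"
    using Cons.prems(3) by (metis list.set_intros(1) split_list)
  have "distinct (A # As)"
    using Cons.prems(1) unfolding disjoint_pairs_iff by simp
  then have set_eq: "set (Bs1 @ Bs2) = set As"
    using Cons.prems(2,3) Bs by auto
  have "disjoint_pairs Bs"
    using Cons.prems unfolding disjoint_pairs_iff by simp
  then have "pairs_sign Bs = shsign A (\<Union>(set (Bs1 @ Bs2))) * pairs_sign (Bs1 @ Bs2)"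
    using pairs_sign_move_to_front Bs by simp
  also have "\<dots> = pairs_sign (A # As)"
    using Cons.IH[of "Bs1 @ Bs2"] Cons.prems(1,2) Bs set_eq by simp
  finally show ?case .
qed

lemma finite_pairings: "finite S \<Longrightarrow> finite (pairings i S)"
  by (rule finite_subset[of _ "{As. set As \<subseteq> Pow S \<and> length As = i}"])
     (auto simp: pairings_def intro: finite_lists_length_eq)

lemma pairings_Suc:
  "pairings (Suc i) S = (\<lambda>(A, As). A # As) ` (SIGMA A:{A\<in>Pow S. card A = 2}. pairings i (S - A))"
  unfolding pairings_def by (fastforce simp: length_Suc_conv)

lemma wpow_eq_sum_pairings:
  assumes b: "\<And>A. b A \<noteq> 0 \<Longrightarrow> card A = 2" and S: "finite S"
  shows "wpow b i S = (\<Sum>As\<in>pairings i S. pairs_sign As * prod_list (map b As))"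
  using S
proof (induction i arbitrary: S)
  case 0
  have "pairings 0 S = (if S = {} then {[]} else {})"
    unfolding pairings_def by auto
  then show ?case
    by (simp add: one_form_def)
next
  case (Suc i)
  let ?T = "{A\<in>Pow S. card A = 2}"
  let ?f = "\<lambda>As. pairs_sign As * prod_list (map b As)"
  have "wpow b (Suc i) S = (\<Sum>A\<in>?T. shsign A (S - A) * b A * wpow b i (S - A))"
    unfolding wpow.simps wedge_def
    by (rule sum.mono_neutral_right) (use Suc.prems b in auto)
  also have "\<dots> = (\<Sum>A\<in>?T. \<Sum>As\<in>pairings i (S - A). ?f (A # As))"
    using Suc.IH Suc.prems by (intro sum.cong) (auto simp: sum_distrib_left pairings_def mult_ac)
  also have "\<dots> = (\<Sum>(A, As)\<in>(SIGMA A:?T. pairings i (S - A)). ?f (A # As))"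
    using Suc.prems by (intro sum.Sigma) (auto intro: finite_pairings)
  also have "\<dots> = (\<Sum>As\<in>pairings (Suc i) S. ?f As)"
    unfolding pairings_Suc by (subst sum.reindex) (auto simp: inj_on_def case_prod_beta)
  finally show ?case .
qed

lemma sum_pairings_same_set:
  assumes "As \<in> pairings i S"
  shows "(\<Sum>Bs | Bs \<in> pairings i S \<and> set Bs = set As. pairs_sign Bs * prod_list (map b Bs))
           = fact i * (pairs_sign As * prod b (set As))"
proof -
  have As: "disjoint_pairs As" "length As = i" "\<Union>(set As) = S"
    using assms unfolding pairings_def by auto
  then have "distinct As"
    unfolding disjoint_pairs_iff by simp
  then have "card (set As) = i"
    using As(2) distinct_card by blast
  have "{Bs. Bs \<in> pairings i S \<and> set Bs = set As} = permutations_of_set (set As)"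
    using As \<open>card (set As) = i\<close>
    unfolding pairings_def permutations_of_set_def disjoint_pairs_iff
    by auto (metis distinct_card)
  moreover have "pairs_sign Bs * prod_list (map b Bs) = pairs_sign As * prod b (set As)"
    if "Bs \<in> permutations_of_set (set As)" for Bs
    using that pairs_sign_perm[OF As(1)] prod.distinct_set_conv_list[of Bs b]
    by (auto simp: permutations_of_set_def)
  ultimately show ?thesis
    using \<open>card (set As) = i\<close> by simp
qed

text \<open>The \<open>i!\<close> orderings of a set of \<open>i\<close> disjoint pairs contribute equal terms to \<open>b\<^sup>i\<close>.\<close>
lemma wpow_div_fact_Ints:
  assumes "is_form n 2 b" "integral_form b"
  shows "wpow b i S / fact i \<in> \<int>"
proof (cases "finite S")
  case False
  then have "wpow b i S = 0"
    by (cases i) (auto simp: one_form_def wedge_def)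
  then show ?thesis by simp
next
  case True
  let ?f = "\<lambda>As. pairs_sign As * prod_list (map b As)"
  have b: "\<And>A. b A \<noteq> 0 \<Longrightarrow> card A = 2" "\<And>A. b A \<in> \<int>"
    using assms unfolding is_form_def integral_form_def by auto
  have "wpow b i S = (\<Sum>As\<in>pairings i S. ?f As)"
    by (rule wpow_eq_sum_pairings[OF b(1) True])
  also have "\<dots> = (\<Sum>P\<in>set ` pairings i S. \<Sum>As | As \<in> pairings i S \<and> set As = P. ?f As)"
    using finite_pairings[OF True] by (rule sum.image_gen)
  finally have "wpow b i S / fact i =
      (\<Sum>P\<in>set ` pairings i S. (\<Sum>As | As \<in> pairings i S \<and> set As = P. ?f As) / fact i)"
    by (simp add: sum_divide_distrib)
  moreover have "(\<Sum>As | As \<in> pairings i S \<and> set As = P. ?f As) / fact i \<in> \<int>"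
    if P: "P \<in> set ` pairings i S" for P
  proof -
    obtain As where "As \<in> pairings i S" "P = set As"
      using P by blast
    then show ?thesis
      using sum_pairings_same_set[of As i S b] pairs_sign_Ints b(2) by (auto intro: Ints_mult Ints_prod)
  qed
  ultimately show ?thesis
    by (simp add: Ints_sum)
qed

lemma wpow_mult_const: "wpow (\<lambda>S. c * b S) i S = c ^ i * wpow b i S"
  by (induction i arbitrary: S) (simp_all add: wedge_def sum_distrib_left algebra_simps)

lemma integral_pBd_zero:
  assumes "is_form n 2 b" "integral_form b" "q > 0" "q ^ i dvd (d choose i) * fact i"
  shows "integral_form (pBd d (\<lambda>S. b S / real q) (\<lambda>_ _. 0) i)"
proof -
  obtain k where k: "(d choose i) * fact i = q ^ i * k"
    using assms(4) by (elim dvdE)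
  have "pBd d (\<lambda>S. b S / real q) (\<lambda>_ _. 0) i S = real k * (wpow b i S / fact i)" for S
  proof -
    have "pBd d (\<lambda>S. b S / real q) (\<lambda>_ _. 0) i S
        = real (d choose i) * wpow (\<lambda>S. inverse (real q) * b S) i S"
      unfolding pBd_def by (simp add: wedge_def divide_inverse mult.commute)
    also have "\<dots> = real ((d choose i) * fact i) / real q ^ i * (wpow b i S / fact i)"
      by (simp add: wpow_mult_const power_inverse divide_inverse)
    also have "\<dots> = real k * (wpow b i S / fact i)"
      using assms(3) by (simp only: k of_nat_mult of_nat_power) simp
    finally show ?thesis .
  qed
  then show ?thesis
    unfolding integral_form_def using wpow_div_fact_Ints[OF assms(1,2)] Ints_of_nat Ints_mult by metis
qed

lemma hodge_class_zero: "hodge_class n J k (\<lambda>_. 0)"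
  unfolding hodge_class_def is_form_def rational_form_def form_eval_def by simp

theorem proposition4p1:
  fixes g p r :: nat and J :: "nat \<Rightarrow> nat \<Rightarrow> real" and b :: form
  assumes "g \<ge> 2"
    and "complex_structure (2 * g) J" and "polarizable (2 * g) J"
    and "prime p" and "r > 0"
    and "is_form (2 * g) 2 b" and "integral_form b"
    and "\<not> (\<exists>h z. hodge_class (2 * g) J 2 h \<and> is_form (2 * g) 2 z \<and> integral_form z \<and>
              (\<forall>S. b S / real p = h S + z S))"
  shows "(\<exists>c. (\<forall>j\<in>{1..min (p ^ nat (expN p r g)) g}. hodge_class (2 * g) J (2 * j) (c j)) \<and>
              (\<forall>i\<in>{1..min (p ^ nat (expN p r g)) g}.
                 integral_form (pBd (p ^ nat (expN p r g)) (\<lambda>S. b S / real (p ^ r)) c i)))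
       \<and> (\<forall>i\<in>{1..min (p ^ nat (expN p r g)) g}.
              integral_form (pBd (p ^ nat (expN p r g)) (\<lambda>S. b S / real (p ^ r)) (\<lambda>_ _. 0) i))
       \<and> (p ^ r = 2 \<longrightarrow> expN p r g = \<lfloor>log (real p) (real g - 1)\<rfloor> + 2)"
proof -
  define d where "d = p ^ nat (expN p r g)"
  have integral: "integral_form (pBd d (\<lambda>S. b S / real (p ^ r)) (\<lambda>_ _. 0) i)"
    if "i \<in> {1..min d g}" for i
  proof (rule integral_pBd_zero[OF assms(6,7)])
    show "p ^ r > 0"
      using assms(4) by (simp add: prime_gt_0_nat)
    show "(p ^ r) ^ i dvd (d choose i) * fact i"
      unfolding d_def power_mult[symmetric]
      using prime_pow_dvd_choose_expN_mult_fact[OF assms(4,5,1)] that by simp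
  qed
  then have "\<exists>c. (\<forall>j\<in>{1..min d g}. hodge_class (2 * g) J (2 * j) (c j)) \<and>
              (\<forall>i\<in>{1..min d g}. integral_form (pBd d (\<lambda>S. b S / real (p ^ r)) c i))"
    by (intro exI[of _ "\<lambda>_ _. 0"]) (simp add: hodge_class_zero)
  then show ?thesis
    unfolding d_def[symmetric]
    using integral expN_if_prime_power_eq_2[OF assms(4)] by blast
qed

end
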